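(* For all $s,t\in\{1,2,3,\dots\}\cup\{\infty\}$, $\mathcal F(s,t)=\{\pi^{-1}:\pi\in\mathcal F(t,s)\}$.
   Context: Forkstack sorting with capacities $s,t\in\{1,2,3,\dots\}\cup\{\infty\}$: a permutation $\pi=\pi_1\cdots\pi_n$ of $\{1,\dots,n\}$ is placed on an input stack with $\pi_1$ on top; a working stack and an output stack are initially empty. A move either (i) removes the top $k$ elements of the input stack ($1\le k\le s$) and places them as a block, relative order unchanged, on top of the working stack, or (ii) removes the top $l$ elements of the working stack ($1\le l\le t$) and places them as a block, relative order unchanged, on top of the output stack. $\pi$ is sortable if some sequence of moves ends with input and working stacks empty and the output stack reading $1,2,\dots,n$ from top to bottom. $\mathcal F(s,t)$ is the set of all sortable permutations (of all lengths); $\pi^{-1}$ denotes the inverse permutation. *)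

theory Defs
  imports Main "HOL-Library.Extended_Nat"
begin

definition is_perm :: "nat list \<Rightarrow> bool" where
  "is_perm p \<longleftrightarrow> distinct p \<and> set p = {1..length p}"

(* Inverse permutation: entry at position v (1-based) is the 1-based position of v in p. *)
definition perm_inv :: "nat list \<Rightarrow> nat list" where
  "perm_inv p = map (\<lambda>v. (LEAST i. i < length p \<and> p ! i = v) + 1) [1..<length p + 1]"

(* Configuration (input, working, output); heads of lists are tops of stacks. *)
type_synonym config = "nat list \<times> nat list \<times> nat list"

inductive fs_move :: "enat \<Rightarrow> enat \<Rightarrow> config \<Rightarrow> config \<Rightarrow> bool" for s t where
  push: "\<lbrakk>1 \<le> k; enat k \<le> s; k \<le> length inp\<rbrakk> \<Longrightarrow>
     fs_move s t (inp, w, out) (drop k inp, take k inp @ w, out)"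
| pop: "\<lbrakk>1 \<le> l; enat l \<le> t; l \<le> length w\<rbrakk> \<Longrightarrow>
     fs_move s t (inp, w, out) (inp, drop l w, take l w @ out)"

definition fs_sortable :: "enat \<Rightarrow> enat \<Rightarrow> nat list \<Rightarrow> bool" where
  "fs_sortable s t p \<longleftrightarrow> (fs_move s t)\<^sup>*\<^sup>* (p, [], []) ([], [], [1..<length p + 1])"

definition F :: "enat \<Rightarrow> enat \<Rightarrow> nat list set" where
  "F s t = {p. is_perm p \<and> fs_sortable s t p}"

end

theory Submission
  imports Defs
begin

(* Read backwards in time with input and output stacks exchanged, a run of the
   (s,t)-machine is a run of the (t,s)-machine: pushes become pops and vice versa.
   A run sorting p thus becomes a run turning 1..n into p. *)

lemma rtranclp_map:
  assumes "\<And>x y. R x y \<Longrightarrow> S (f x) (f y)" and "R\<^sup>*\<^sup>* x y"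
  shows "S\<^sup>*\<^sup>* (f x) (f y)"
  using assms(2) by induction (auto intro: rtranclp.rtrancl_into_rtrancl assms(1))

definition mirror_config :: "config \<Rightarrow> config" where
  "mirror_config = (\<lambda>(inp, w, out). (out, w, inp))"

definition map_config :: "(nat \<Rightarrow> nat) \<Rightarrow> config \<Rightarrow> config" where
  "map_config g = (\<lambda>(inp, w, out). (map g inp, map g w, map g out))"

lemma fs_move_mirror:
  "fs_move s t c c' \<Longrightarrow> fs_move t s (mirror_config c') (mirror_config c)"
proof (induction rule: fs_move.induct)
  case (push k inp w out)
  have "fs_move t s (out, take k inp @ w, drop k inp)
      (out, drop k (take k inp @ w), take k (take k inp @ w) @ drop k inp)"
    using push by (intro fs_move.pop) auto
  with push show ?case by (simp add: mirror_config_def min_def)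
next
  case (pop l w inp out)
  have "fs_move t s (take l w @ out, drop l w, inp)
      (drop l (take l w @ out), take l (take l w @ out) @ drop l w, inp)"
    using pop by (intro fs_move.push) auto
  with pop show ?case by (simp add: mirror_config_def min_def)
qed

lemma fs_move_map_config:
  "fs_move s t c c' \<Longrightarrow> fs_move s t (map_config g c) (map_config g c')"
proof (induction rule: fs_move.induct)
  case (push k inp w out)
  then show ?case
    using fs_move.push[of k s "map g inp" t "map g w" "map g out"]
    by (simp add: map_config_def take_map drop_map)
next
  case (pop l w inp out)
  then show ?case
    using fs_move.pop[of l t "map g w" s "map g inp" "map g out"]
    by (simp add: map_config_def take_map drop_map)
qed

lemma fs_moves_mirror:
  "(fs_move s t)\<^sup>*\<^sup>* c c' \<Longrightarrow> (fs_move t s)\<^sup>*\<^sup>* (mirror_config c') (mirror_config c)"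
  by (rule rtranclp_converseD, rule rtranclp_map[where S = "(fs_move t s)\<inverse>\<inverse>"])
    (auto intro: fs_move_mirror)

lemma fs_moves_map_config:
  "(fs_move s t)\<^sup>*\<^sup>* c c' \<Longrightarrow> (fs_move s t)\<^sup>*\<^sup>* (map_config g c) (map_config g c')"
  by (rule rtranclp_map) (rule fs_move_map_config)

definition perm_pos :: "nat list \<Rightarrow> nat \<Rightarrow> nat" where
  "perm_pos p v = (LEAST i. i < length p \<and> p ! i = v) + 1"

lemma perm_inv_eq_map_perm_pos: "perm_inv p = map (perm_pos p) [1..<length p + 1]"
  by (simp only: perm_inv_def perm_pos_def[abs_def])

lemma length_perm_inv [simp]: "length (perm_inv p) = length p"
  by (simp add: perm_inv_def del: upt_Suc)

lemma nth_perm_inv: "i < length p \<Longrightarrow> perm_inv p ! i = perm_pos p (Suc i)"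
  by (simp add: perm_inv_eq_map_perm_pos del: upt_Suc)

lemma perm_pos_nth:
  assumes "distinct p" and "i < length p"
  shows "perm_pos p (p ! i) = Suc i"
proof -
  have "(LEAST k. k < length p \<and> p ! k = p ! i) = i"
    by (rule Least_equality) (use assms nth_eq_iff_index_eq in auto)
  then show ?thesis by (simp add: perm_pos_def)
qed

lemma map_perm_pos_self: "distinct p \<Longrightarrow> map (perm_pos p) p = [1..<length p + 1]"
  by (rule nth_equalityI) (simp_all add: perm_pos_nth del: upt_Suc)

lemma is_perm_perm_inv:
  assumes "is_perm p"
  shows "is_perm (perm_inv p)"
proof -
  have set_id: "set [1..<length p + 1] = set p"
    using assms by (simp add: is_perm_def atLeastLessThanSuc_atLeastAtMost del: upt_Suc)
  have "set (perm_inv p) = set (map (perm_pos p) p)"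
    by (simp only: perm_inv_eq_map_perm_pos set_map set_id)
  also have "\<dots> = {1..length p}"
    using assms
    by (simp add: map_perm_pos_self is_perm_def atLeastLessThanSuc_atLeastAtMost del: upt_Suc)
  finally have set_eq: "set (perm_inv p) = {1..length (perm_inv p)}" by simp
  then have "distinct (perm_inv p)"
    by (simp add: card_distinct)
  with set_eq show ?thesis by (simp add: is_perm_def)
qed

lemma perm_inv_perm_inv:
  assumes "is_perm p"
  shows "perm_inv (perm_inv p) = p"
proof (rule nth_equalityI)
  fix j assume "j < length (perm_inv (perm_inv p))"
  then have j: "j < length p" by simp
  let ?q = "perm_inv p"
  have "p ! j \<in> {1..length p}"
    using assms j nth_mem[OF j] by (simp add: is_perm_def)
  then have k: "p ! j - 1 < length ?q" and pj: "Suc (p ! j - 1) = p ! j" by auto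
  have "?q ! (p ! j - 1) = Suc j"
    using assms j k pj by (simp add: nth_perm_inv perm_pos_nth is_perm_def)
  then have "perm_pos ?q (Suc j) = p ! j"
    using perm_pos_nth[of ?q "p ! j - 1"] k pj is_perm_perm_inv[OF assms]
    by (simp add: is_perm_def)
  then show "perm_inv ?q ! j = p ! j"
    using j by (simp add: nth_perm_inv)
qed simp

lemma fs_sortable_perm_inv:
  assumes "is_perm p" and "fs_sortable s t p"
  shows "fs_sortable t s (perm_inv p)"
proof -
  let ?id = "[1..<length p + 1]"
  have "(fs_move t s)\<^sup>*\<^sup>* (?id, [], []) ([], [], p)"
    using fs_moves_mirror[of s t "(p, [], [])" "([], [], ?id)"] assms(2)
    by (simp add: fs_sortable_def mirror_config_def)
  then have "(fs_move t s)\<^sup>*\<^sup>* (map (perm_pos p) ?id, [], []) ([], [], map (perm_pos p) p)"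
    using fs_moves_map_config[of t s "(?id, [], [])" "([], [], p)" "perm_pos p"]
    by (simp add: map_config_def)
  then show ?thesis
    using assms(1) by (simp add: fs_sortable_def perm_inv_eq_map_perm_pos map_perm_pos_self
        is_perm_def del: upt_Suc)
qed

lemma perm_inv_mem_F: "p \<in> F s t \<Longrightarrow> perm_inv p \<in> F t s"
  unfolding F_def using is_perm_perm_inv fs_sortable_perm_inv by blast

theorem mainTheorem3:
  fixes s t :: enat
  assumes "s \<ge> 1" and "t \<ge> 1"
  shows "F s t = perm_inv ` F t s"
proof
  show "perm_inv ` F t s \<subseteq> F s t"
    using perm_inv_mem_F by blast
  show "F s t \<subseteq> perm_inv ` F t s"
  proof
    fix p assume p: "p \<in> F s t"
    then have "p = perm_inv (perm_inv p)"
      by (simp add: F_def perm_inv_perm_inv)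
    then show "p \<in> perm_inv ` F t s"
      using perm_inv_mem_F[OF p] by (rule image_eqI)
  qed
qed

end
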